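(* Let $\mu$ be a centered log-concave probability measure on $\mathbb{R}^n$ with density $f$. Then for every $t\geq 6n$, $$\mu(R_t(\mu))\geq 1-e^{-t/5}.$$
   Context: A probability measure on $\mathbb{R}^n$ is log-concave (full-dimensional) if it has a density $f$ with $\ln f$ concave; it is centered if its barycenter $\int x f(x)\,dx$ is $0$. For $t\geq 0$, the super-level set is $R_t(\mu)=\{x\in\mathbb{R}^n: f(x)\geq e^{-t}\|f\|_\infty\}$. *)

theory Defs
  imports "HOL-Analysis.Analysis"
begin

definition log_concave_fun :: "('a::euclidean_space \<Rightarrow> real) \<Rightarrow> bool" where
  "log_concave_fun f \<longleftrightarrow> (\<forall>x. 0 \<le> f x) \<and>
     (\<forall>x y l. 0 < l \<and> l < 1 \<longrightarrow>
        f ((1 - l) *\<^sub>R x + l *\<^sub>R y) \<ge> f x powr (1 - l) * f y powr l)"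

definition log_concave_density :: "('a::euclidean_space \<Rightarrow> real) \<Rightarrow> bool" where
  "log_concave_density f \<longleftrightarrow> log_concave_fun f \<and> f \<in> borel_measurable lborel \<and>
     integrable lborel f \<and> integral\<^sup>L lborel f = 1"

definition centered_density :: "('a::euclidean_space \<Rightarrow> real) \<Rightarrow> bool" where
  "centered_density f \<longleftrightarrow> integrable lborel (\<lambda>x. f x *\<^sub>R x) \<and>
     integral\<^sup>L lborel (\<lambda>x. f x *\<^sub>R x) = 0"

definition sup_norm_fun :: "('a \<Rightarrow> real) \<Rightarrow> real" where
  "sup_norm_fun f = (SUP x. f x)"

definition superlevel :: "('a \<Rightarrow> real) \<Rightarrow> real \<Rightarrow> 'a set" where
  "superlevel f t = {x. f x \<ge> exp (- t) * sup_norm_fun f}"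

definition dens_measure :: "('a::euclidean_space \<Rightarrow> real) \<Rightarrow> 'a set \<Rightarrow> real" where
  "dens_measure f A = measure (density lborel (\<lambda>x. ennreal (f x))) A"

end

theory Submission
  imports Defs
begin

text \<open>Log-concavity at midpoints gives f ((y + x) / 2) >= sqrt (f y) sqrt (f x). Integrating in x
  and rescaling by 1/2 yields sqrt (f y) * (integral of sqrt f) <= 2^n for every y; in particular f is
  bounded. Since f <= sqrt c sqrt f on {f < c}, the mass of {f < c} is at most 2^n sqrt (c / f y).
  Choosing f y > sup f / e and c = e^-t sup f bounds the mass outside R_t by 2^n e^((1 - t) / 2),
  which is at most e^(-t/5) once t >= 6n.\<close>

lemma nn_integral_lborel_affine:
  fixes f :: "'a::euclidean_space \<Rightarrow> ennreal" and c :: real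
  assumes [measurable]: "f \<in> borel_measurable borel" and c: "c \<noteq> 0"
  shows "(\<integral>\<^sup>+x. f x \<partial>lborel) = ennreal (\<bar>c\<bar> ^ DIM('a)) * (\<integral>\<^sup>+x. f (t + c *\<^sub>R x) \<partial>lborel)"
  by (subst lborel_affine[OF c, of t])
     (simp add: nn_integral_density nn_integral_distr nn_integral_cmult)

lemma nn_integral_lborel_midpoint:
  fixes f :: "'a::euclidean_space \<Rightarrow> ennreal"
  assumes "f \<in> borel_measurable borel"
  shows "(\<integral>\<^sup>+x. f ((1/2) *\<^sub>R y + (1/2) *\<^sub>R x) \<partial>lborel) = ennreal (2 ^ DIM('a)) * (\<integral>\<^sup>+x. f x \<partial>lborel)"
proof -
  let ?I = "\<integral>\<^sup>+x. f ((1/2) *\<^sub>R y + (1/2) *\<^sub>R x) \<partial>lborel"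
  have "ennreal (2 ^ DIM('a)) * (\<integral>\<^sup>+x. f x \<partial>lborel) = ennreal (2 ^ DIM('a)) * (ennreal ((1/2) ^ DIM('a)) * ?I)"
    using nn_integral_lborel_affine[OF assms, of "1/2"] by simp
  also have "\<dots> = ennreal (2 ^ DIM('a) * (1/2) ^ DIM('a)) * ?I"
    by (simp add: ennreal_mult mult.assoc)
  also have "\<dots> = ?I"
    by (simp add: power_mult_distrib[symmetric])
  finally show ?thesis ..
qed

lemma log_concave_fun_midpoint:
  assumes "log_concave_fun f"
  shows "sqrt (f x) * sqrt (f y) \<le> f ((1/2) *\<^sub>R x + (1/2) *\<^sub>R y)"
proof -
  have "f x powr (1 - 1/2) * f y powr (1/2) \<le> f ((1 - 1/2) *\<^sub>R x + (1/2) *\<^sub>R y)"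
    using assms unfolding log_concave_fun_def
    by (metis field_sum_of_halves half_gt_zero_iff less_add_same_cancel1 zero_less_one)
  then show ?thesis
    using assms unfolding log_concave_fun_def by (simp add: powr_half_sqrt)
qed

lemma log_concave_densityD:
  assumes "log_concave_density f"
  shows log_concave_density_nonneg: "0 \<le> f x"
    and log_concave_density_measurable: "f \<in> borel_measurable borel"
    and log_concave_density_integrable: "integrable lborel f"
    and log_concave_density_integral: "integral\<^sup>L lborel f = 1"
  using assms unfolding log_concave_density_def log_concave_fun_def by auto

lemma log_concave_density_nn_integral:
  assumes "log_concave_density f"
  shows "(\<integral>\<^sup>+x. ennreal (f x) \<partial>lborel) = 1"
  using nn_integral_eq_integral[OF log_concave_density_integrable[OF assms]]
  by (simp add: log_concave_density_nonneg[OF assms] log_concave_density_integral[OF assms])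

lemma log_concave_density_ex_pos:
  assumes "log_concave_density f"
  obtains x where "f x > 0"
proof -
  have "f \<noteq> (\<lambda>_. 0)"
    using log_concave_density_integral[OF assms] by auto
  then show ?thesis
    using that log_concave_density_nonneg[OF assms] by (metis order_less_le)
qed

lemma log_concave_sqrt_nn_integral_bound:
  fixes f :: "'a::euclidean_space \<Rightarrow> real"
  assumes lc: "log_concave_density f"
  shows "ennreal (sqrt (f y)) * (\<integral>\<^sup>+x. ennreal (sqrt (f x)) \<partial>lborel) \<le> ennreal (2 ^ DIM('a))"
proof -
  note nonneg = log_concave_density_nonneg[OF lc]
  note [measurable] = log_concave_density_measurable[OF lc]
  have "ennreal (sqrt (f y)) * (\<integral>\<^sup>+x. ennreal (sqrt (f x)) \<partial>lborel)
      = (\<integral>\<^sup>+x. ennreal (sqrt (f y) * sqrt (f x)) \<partial>lborel)"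
    by (subst nn_integral_cmult[symmetric]) (auto simp: ennreal_mult nonneg)
  also have "\<dots> \<le> (\<integral>\<^sup>+x. ennreal (f ((1/2) *\<^sub>R y + (1/2) *\<^sub>R x)) \<partial>lborel)"
    using lc unfolding log_concave_density_def
    by (intro nn_integral_mono ennreal_leI log_concave_fun_midpoint) auto
  also have "\<dots> = ennreal (2 ^ DIM('a))"
    by (subst nn_integral_lborel_midpoint) (simp_all add: log_concave_density_nn_integral[OF lc])
  finally show ?thesis .
qed

lemma log_concave_density_integrable_sqrt:
  assumes lc: "log_concave_density f"
  shows "integrable lborel (\<lambda>x. sqrt (f x))"
proof -
  obtain y where y: "f y > 0"
    using log_concave_density_ex_pos[OF lc] .
  have "ennreal (sqrt (f y)) * (\<integral>\<^sup>+x. ennreal (sqrt (f x)) \<partial>lborel) < \<infinity>"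
    using log_concave_sqrt_nn_integral_bound[OF lc, of y] by (simp add: order_le_less_trans)
  then have "(\<integral>\<^sup>+x. ennreal (sqrt (f x)) \<partial>lborel) < \<infinity>"
    using y by (auto simp: ennreal_mult_less_top)
  then show ?thesis
    using log_concave_density_measurable[OF lc] log_concave_density_nonneg[OF lc]
    by (intro integrableI_nonneg) auto
qed

lemma log_concave_sqrt_integral_bound:
  fixes f :: "'a::euclidean_space \<Rightarrow> real"
  assumes lc: "log_concave_density f"
  shows "sqrt (f y) * (\<integral>x. sqrt (f x) \<partial>lborel) \<le> 2 ^ DIM('a)"
proof -
  have "(\<integral>\<^sup>+x. ennreal (sqrt (f x)) \<partial>lborel) = ennreal (\<integral>x. sqrt (f x) \<partial>lborel)"
    by (intro nn_integral_eq_integral log_concave_density_integrable_sqrt[OF lc])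
       (simp add: log_concave_density_nonneg[OF lc])
  then show ?thesis
    using log_concave_sqrt_nn_integral_bound[OF lc, of y]
    by (simp add: ennreal_mult[symmetric] log_concave_density_nonneg[OF lc])
qed

lemma log_concave_density_integral_sqrt_pos:
  assumes lc: "log_concave_density f"
  shows "0 < (\<integral>x. sqrt (f x) \<partial>lborel)"
proof -
  note nonneg = log_concave_density_nonneg[OF lc]
  have "(\<integral>x. sqrt (f x) \<partial>lborel) \<noteq> 0"
  proof
    assume "(\<integral>x. sqrt (f x) \<partial>lborel) = 0"
    then have "AE x in lborel. f x = 0"
      using integral_nonneg_eq_0_iff_AE[OF log_concave_density_integrable_sqrt[OF lc]] nonneg
      by auto
    then have "integral\<^sup>L lborel f = 0"
      by (rule integral_eq_zero_AE)
    then show False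
      using log_concave_density_integral[OF lc] by simp
  qed
  moreover have "0 \<le> (\<integral>x. sqrt (f x) \<partial>lborel)"
    by (simp add: nonneg)
  ultimately show ?thesis
    by linarith
qed

lemma log_concave_density_bdd_above:
  assumes lc: "log_concave_density f"
  shows "bdd_above (range f)"
proof (rule bdd_aboveI2)
  fix y
  define S where "S = (\<integral>x. sqrt (f x) \<partial>lborel)"
  have "0 < S"
    unfolding S_def by (rule log_concave_density_integral_sqrt_pos[OF lc])
  then have "sqrt (f y) \<le> 2 ^ DIM('a) / S"
    using log_concave_sqrt_integral_bound[OF lc, of y] by (simp add: S_def pos_le_divide_eq)
  then have "(sqrt (f y))\<^sup>2 \<le> (2 ^ DIM('a) / S)\<^sup>2"
    by (rule power_mono) (simp add: log_concave_density_nonneg[OF lc])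
  then show "f y \<le> (2 ^ DIM('a) / S)\<^sup>2"
    by (simp add: log_concave_density_nonneg[OF lc])
qed

lemma log_concave_density_sup_pos:
  assumes lc: "log_concave_density f"
  shows "0 < sup_norm_fun f"
proof -
  obtain y where "f y > 0"
    using log_concave_density_ex_pos[OF lc] .
  then show ?thesis
    using cSUP_upper[OF _ log_concave_density_bdd_above[OF lc], of y]
    unfolding sup_norm_fun_def by simp
qed

lemma log_concave_density_near_sup:
  assumes lc: "log_concave_density f"
  obtains y where "exp (- 1) * sup_norm_fun f < f y" and "0 < f y"
proof -
  have "exp (- 1) * sup_norm_fun f < sup_norm_fun f"
    using log_concave_density_sup_pos[OF lc] by simp
  then obtain y where "exp (- 1) * sup_norm_fun f < f y"
    using less_cSUP_iff[OF _ log_concave_density_bdd_above[OF lc]]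
    unfolding sup_norm_fun_def by auto
  moreover have "0 < exp (- 1) * sup_norm_fun f"
    using log_concave_density_sup_pos[OF lc] by simp
  ultimately show ?thesis
    using that by simp
qed

lemma integral_sublevel_le_sqrt:
  fixes f :: "'a \<Rightarrow> real"
  assumes f: "integrable M f" and sqrt_f: "integrable M (\<lambda>x. sqrt (f x))"
    and nonneg: "\<And>x. 0 \<le> f x" and "0 \<le> c"
  shows "(\<integral>x. f x * indicator {x \<in> space M. f x < c} x \<partial>M) \<le> sqrt c * (\<integral>x. sqrt (f x) \<partial>M)"
proof -
  have [measurable]: "f \<in> borel_measurable M"
    using f by (rule borel_measurable_integrable)
  have "f x * indicator {x \<in> space M. f x < c} x \<le> sqrt c * sqrt (f x)" for x
  proof (cases "f x < c")
    case True
    then have "sqrt (f x) * sqrt (f x) \<le> sqrt c * sqrt (f x)"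
      by (intro mult_right_mono) (auto simp: nonneg)
    then show ?thesis
      by (simp add: nonneg \<open>0 \<le> c\<close> indicator_def)
  qed (simp add: nonneg \<open>0 \<le> c\<close> indicator_def)
  moreover have "integrable M (\<lambda>x. f x * indicator {x \<in> space M. f x < c} x)"
    by (intro integrable_real_mult_indicator f) simp
  ultimately have "(\<integral>x. f x * indicator {x \<in> space M. f x < c} x \<partial>M) \<le> (\<integral>x. sqrt c * sqrt (f x) \<partial>M)"
    using sqrt_f by (intro integral_mono) auto
  then show ?thesis
    by simp
qed

lemma log_concave_sublevel_mass:
  fixes f :: "'a::euclidean_space \<Rightarrow> real"
  assumes lc: "log_concave_density f" and "0 < f y" and "0 \<le> c"
  shows "(\<integral>x. f x * indicator {x. f x < c} x \<partial>lborel) \<le> 2 ^ DIM('a) * sqrt (c / f y)"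
proof -
  have "(\<integral>x. f x * indicator {x. f x < c} x \<partial>lborel) \<le> sqrt c * (\<integral>x. sqrt (f x) \<partial>lborel)"
    using integral_sublevel_le_sqrt[OF log_concave_density_integrable[OF lc]
        log_concave_density_integrable_sqrt[OF lc] log_concave_density_nonneg[OF lc] \<open>0 \<le> c\<close>]
    by simp
  also have "\<dots> \<le> sqrt c * (2 ^ DIM('a) / sqrt (f y))"
    using log_concave_sqrt_integral_bound[OF lc, of y] \<open>0 < f y\<close> \<open>0 \<le> c\<close>
    by (intro mult_left_mono) (simp_all add: pos_le_divide_eq mult.commute)
  also have "\<dots> = 2 ^ DIM('a) * sqrt (c / f y)"
    unfolding real_sqrt_divide by (simp add: mult.commute)
  finally show ?thesis .
qed

lemma dens_measure_compl:
  assumes f: "integrable lborel f" and nonneg: "\<And>x. 0 \<le> f x"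
    and B: "B \<in> sets lborel"
  shows "dens_measure f (- B) = integral\<^sup>L lborel f - (\<integral>x. f x * indicator B x \<partial>lborel)"
proof -
  have [measurable]: "f \<in> borel_measurable lborel"
    using f by (rule borel_measurable_integrable)
  have compl [measurable]: "- B \<in> sets lborel"
    using B by (simp add: borel_comp)
  have compl_int: "integrable lborel (\<lambda>x. f x * indicator (- B) x)"
    by (intro integrable_real_mult_indicator f compl)
  have "emeasure (density lborel (\<lambda>x. ennreal (f x))) (- B)
      = (\<integral>\<^sup>+x. ennreal (f x * indicator (- B) x) \<partial>lborel)"
    using compl by (subst emeasure_density) (auto intro!: nn_integral_cong split: split_indicator)
  also have "\<dots> = ennreal (\<integral>x. f x * indicator (- B) x \<partial>lborel)"
    by (intro nn_integral_eq_integral compl_int) (simp add: nonneg)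
  finally have "dens_measure f (- B) = (\<integral>x. f x * indicator (- B) x \<partial>lborel)"
    unfolding dens_measure_def measure_def by (simp add: nonneg)
  also have "\<dots> = (\<integral>x. f x - f x * indicator B x \<partial>lborel)"
    by (intro Bochner_Integration.integral_cong) (auto split: split_indicator)
  also have "\<dots> = integral\<^sup>L lborel f - (\<integral>x. f x * indicator B x \<partial>lborel)"
    by (intro Bochner_Integration.integral_diff f integrable_real_mult_indicator B)
  finally show ?thesis .
qed

lemma log_concave_dens_measure_superlevel:
  assumes lc: "log_concave_density f"
  shows "dens_measure f (superlevel f t)
    = 1 - (\<integral>x. f x * indicator {x. f x < exp (- t) * sup_norm_fun f} x \<partial>lborel)"
proof -
  have "superlevel f t = - {x. f x < exp (- t) * sup_norm_fun f}"
    unfolding superlevel_def by auto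
  moreover have "{x. f x < exp (- t) * sup_norm_fun f} \<in> sets lborel"
    using log_concave_density_measurable[OF lc] by measurable
  ultimately show ?thesis
    using dens_measure_compl[OF log_concave_density_integrable[OF lc] log_concave_density_nonneg[OF lc]]
    by (simp add: log_concave_density_integral[OF lc])
qed

lemma two_pow_mult_sqrt_exp_le:
  fixes t :: real
  assumes "0 < n" and "6 * real n \<le> t"
  shows "2 ^ n * sqrt (exp (1 - t)) \<le> exp (- t / 5)"
proof -
  have "real n * ln 2 \<le> real n"
    using mult_left_le[of "ln 2" "real n"] ln_2_less_1 by simp
  moreover have "1 \<le> real n"
    using assms(1) by simp
  ultimately have exponent_le: "real n * ln 2 + (1 - t) / 2 \<le> - t / 5"
    using assms(2) by argo
  have "sqrt (exp (1 - t)) = exp ((1 - t) / 2)"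
    by (rule real_sqrt_unique) (simp_all add: power2_eq_square exp_add[symmetric])
  then have "2 ^ n * sqrt (exp (1 - t)) = exp (real n * ln 2 + (1 - t) / 2)"
    by (simp add: exp_add exp_of_nat_mult)
  also have "\<dots> \<le> exp (- t / 5)"
    using exponent_le by simp
  finally show ?thesis .
qed

theorem lemma3p1:
  fixes f :: "'a::euclidean_space \<Rightarrow> real" and t :: real
  assumes "log_concave_density f"
    and "centered_density f"
    and "t \<ge> 6 * real DIM('a)"
  shows "dens_measure f (superlevel f t) \<ge> 1 - exp (- t / 5)"
proof -
  note lc = assms(1)
  define c where "c = exp (- t) * sup_norm_fun f"
  obtain y where y: "exp (- 1) * sup_norm_fun f < f y" and "0 < f y"
    using log_concave_density_near_sup[OF lc] .
  have "0 \<le> c"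
    unfolding c_def using log_concave_density_sup_pos[OF lc] by simp
  have "c = exp (1 - t) * (exp (- 1) * sup_norm_fun f)"
    unfolding c_def by (simp add: mult.assoc flip: exp_add)
  also have "\<dots> \<le> exp (1 - t) * f y"
    using y by (intro mult_left_mono) auto
  finally have "sqrt (c / f y) \<le> sqrt (exp (1 - t))"
    using \<open>0 < f y\<close> by (intro real_sqrt_le_mono) (simp add: pos_divide_le_eq)
  have "1 - exp (- t / 5) \<le> 1 - 2 ^ DIM('a) * sqrt (exp (1 - t))"
    using two_pow_mult_sqrt_exp_le[OF DIM_positive assms(3)] by linarith
  also have "\<dots> \<le> 1 - 2 ^ DIM('a) * sqrt (c / f y)"
    using \<open>sqrt (c / f y) \<le> sqrt (exp (1 - t))\<close> by (intro diff_left_mono mult_left_mono) simp_all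
  also have "\<dots> \<le> 1 - (\<integral>x. f x * indicator {x. f x < c} x \<partial>lborel)"
    using log_concave_sublevel_mass[OF lc \<open>0 < f y\<close> \<open>0 \<le> c\<close>] by linarith
  also have "\<dots> = dens_measure f (superlevel f t)"
    unfolding c_def by (rule log_concave_dens_measure_superlevel[OF lc, symmetric])
  finally show ?thesis .
qed

end
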